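(* Let $H:\omega\to\omega$, let $\sigma\in{}^{<\omega}\omega$ with $|\sigma|=m$, let $n\in\omega$, and let $T\subseteq{}^{<\omega}H$ be a finite tree which is $H\restriction(m+2n)$-full-branching above $\sigma$. Let $C_1,C_2$ be a partition of the set of leaves of $T$. Then at least one of the following holds: (i) the tree consisting of the nodes of $T$ comparable with some element of $C_1$ is $H\restriction(m+n)$-full-branching above $\sigma$; (ii) there exists $\tau\succ\sigma$ with $|\tau|=m+n$ such that the tree consisting of the nodes of $T$ comparable with some element of $C_2$ is $H\restriction(m+2n)$-full-branching above $\tau$.
   Context: A tree is a set of finite strings closed under prefixes; a leaf is a node with no proper extension in the tree. ${}^{<\omega}H$ is the tree of strings $\rho$ with $\rho(i)<H(i)$ for all $i<|\rho|$. For $f:\omega\to\omega$, $f<H$ means $f(i)<H(i)$ for all $i$. For a string $\sigma$ and $N>|\sigma|$, a tree $T$ is $H\restriction N$-full-branching above $\sigma$ if for every $f<H$ with $\sigma\prec f$ we have $f\restriction N\in T$. *)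

theory Defs
  imports Main "HOL-Library.Sublist"
begin

text \<open>Finite strings of naturals are lists; \<open>\<sigma> \<preceq> \<tau>\<close> is \<open>prefix \<sigma> \<tau>\<close>.\<close>

definition is_tree :: "nat list set \<Rightarrow> bool" where
  "is_tree T \<longleftrightarrow> (\<forall>\<rho> \<in> T. \<forall>\<pi>. prefix \<pi> \<rho> \<longrightarrow> \<pi> \<in> T)"

definition bounded_strings :: "(nat \<Rightarrow> nat) \<Rightarrow> nat list set" where
  "bounded_strings H = {\<rho>. \<forall>i < length \<rho>. \<rho> ! i < H i}"

definition leaves :: "nat list set \<Rightarrow> nat list set" where
  "leaves T = {\<rho> \<in> T. \<not> (\<exists>\<tau> \<in> T. strict_prefix \<rho> \<tau>)}"

definition fun_below :: "(nat \<Rightarrow> nat) \<Rightarrow> (nat \<Rightarrow> nat) \<Rightarrow> bool" where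
  "fun_below f H \<longleftrightarrow> (\<forall>i. f i < H i)"

definition str_prefix_fun :: "nat list \<Rightarrow> (nat \<Rightarrow> nat) \<Rightarrow> bool" where
  "str_prefix_fun \<sigma> f \<longleftrightarrow> (\<forall>i < length \<sigma>. f i = \<sigma> ! i)"

definition restr :: "(nat \<Rightarrow> nat) \<Rightarrow> nat \<Rightarrow> nat list" where
  "restr f N = map f [0..<N]"

definition full_branching :: "(nat \<Rightarrow> nat) \<Rightarrow> nat \<Rightarrow> nat list set \<Rightarrow> nat list \<Rightarrow> bool" where
  "full_branching H N T \<sigma> \<longleftrightarrow>
     (\<forall>f. fun_below f H \<longrightarrow> str_prefix_fun \<sigma> f \<longrightarrow> restr f N \<in> T)"

definition comparable_subtree :: "nat list set \<Rightarrow> nat list set \<Rightarrow> nat list set" where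
  "comparable_subtree T C = {\<rho> \<in> T. \<exists>c \<in> C. prefix \<rho> c \<or> prefix c \<rho>}"

end

theory Submission
  imports Defs
begin

text \<open>If (i) fails, some \<open>f < H\<close> through \<open>\<sigma>\<close> has \<open>\<tau> = f \<restriction> (m + n)\<close> comparable with no
  element of \<open>C\<^sub>1\<close>. Every \<open>g < H\<close> through \<open>\<tau>\<close> has \<open>g \<restriction> (m + 2n) \<in> T\<close>, and since \<open>T\<close> is finite
  this node lies below some leaf. That leaf extends \<open>\<tau>\<close>, so it is not in \<open>C\<^sub>1\<close>; hence it is in
  \<open>C\<^sub>2\<close>, and \<open>g \<restriction> (m + 2n)\<close> is comparable with an element of \<open>C\<^sub>2\<close>.\<close>

lemma length_restr [simp]: "length (restr f N) = N"
  unfolding restr_def by simp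

lemma restr_eq_if_str_prefix_fun: "str_prefix_fun \<sigma> f \<Longrightarrow> restr f (length \<sigma>) = \<sigma>"
  unfolding restr_def str_prefix_fun_def by (intro nth_equalityI) auto

lemma prefix_restr_mono: "a \<le> b \<Longrightarrow> prefix (restr f a) (restr f b)"
proof -
  assume "a \<le> b"
  then have "[0..<b] = [0..<a] @ [a..<b]"
    using upt_add_eq_append[of 0 a "b - a"] by simp
  then show ?thesis
    unfolding restr_def by (simp add: prefix_def)
qed

lemma prefix_restr_if_str_prefix_fun:
  "str_prefix_fun \<sigma> f \<Longrightarrow> length \<sigma> \<le> N \<Longrightarrow> prefix \<sigma> (restr f N)"
  using prefix_restr_mono restr_eq_if_str_prefix_fun by metis

lemma str_prefix_fun_prefix: "prefix \<sigma> \<tau> \<Longrightarrow> str_prefix_fun \<tau> f \<Longrightarrow> str_prefix_fun \<sigma> f"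
  unfolding str_prefix_fun_def by (auto simp: prefix_def nth_append)

lemma full_branching_prefix:
  "prefix \<sigma> \<tau> \<Longrightarrow> full_branching H N T \<sigma> \<Longrightarrow> full_branching H N T \<tau>"
  unfolding full_branching_def using str_prefix_fun_prefix by blast

lemma finite_tree_leaf_above:
  assumes "finite T" and "\<rho> \<in> T"
  obtains l where "l \<in> leaves T" and "prefix \<rho> l"
proof -
  let ?S = "{x \<in> T. prefix \<rho> x}"
  have "finite ?S" and "?S \<noteq> {}"
    using assms by auto
  then obtain l where l: "l \<in> ?S" and l_max: "Max (length ` ?S) = length l"
    by (rule obtains_MAX)
  have "l \<in> leaves T"
  proof (rule ccontr)
    assume "l \<notin> leaves T"
    then obtain t where "t \<in> T" and "strict_prefix l t"
      using l unfolding leaves_def by auto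
    moreover have "prefix \<rho> l"
      using l by simp
    ultimately have "t \<in> ?S"
      using prefix_order.trans prefix_order.less_imp_le by blast
    then have "length t \<le> length l"
      unfolding l_max[symmetric] using \<open>finite ?S\<close> by (intro Max_ge) simp_all
    with \<open>strict_prefix l t\<close> show False
      using prefix_length_less by fastforce
  qed
  with l show ?thesis
    using that by blast
qed

lemma in_comparable_subtree_of_other_part:
  assumes "is_tree T" and "finite T" and "leaves T \<subseteq> C1 \<union> C2"
    and "\<tau> \<notin> comparable_subtree T C1" and "\<rho> \<in> T" and "prefix \<tau> \<rho>"
  shows "\<rho> \<in> comparable_subtree T C2"
proof -
  obtain l where l: "l \<in> leaves T" "prefix \<rho> l"
    using finite_tree_leaf_above[OF \<open>finite T\<close> \<open>\<rho> \<in> T\<close>] .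
  have "\<tau> \<in> T"
    using assms(1,5,6) unfolding is_tree_def by blast
  then have "l \<notin> C1"
    using assms(4,6) l(2) prefix_order.trans unfolding comparable_subtree_def by blast
  then have "l \<in> C2"
    using l(1) assms(3) by blast
  then show ?thesis
    using \<open>\<rho> \<in> T\<close> l(2) unfolding comparable_subtree_def by blast
qed

lemma full_branching_comparable_subtree_of_other_part:
  assumes "is_tree T" and "finite T" and "leaves T \<subseteq> C1 \<union> C2"
    and "\<tau> \<notin> comparable_subtree T C1" and "length \<tau> \<le> N"
    and "full_branching H N T \<tau>"
  shows "full_branching H N (comparable_subtree T C2) \<tau>"
  unfolding full_branching_def
proof (intro allI impI)
  fix g
  assume "fun_below g H" and "str_prefix_fun \<tau> g"
  then have "restr g N \<in> T"
    using assms(6) unfolding full_branching_def by blast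
  moreover have "prefix \<tau> (restr g N)"
    using \<open>str_prefix_fun \<tau> g\<close> assms(5) by (rule prefix_restr_if_str_prefix_fun)
  ultimately show "restr g N \<in> comparable_subtree T C2"
    using in_comparable_subtree_of_other_part assms(1-4) by blast
qed

theorem mainTheorem9:
  fixes H :: "nat \<Rightarrow> nat" and \<sigma> :: "nat list" and m n :: nat
    and T C1 C2 :: "nat list set"
  assumes "length \<sigma> = m"
    and "is_tree T" and "finite T" and "T \<subseteq> bounded_strings H"
    and "full_branching H (m + 2 * n) T \<sigma>"
    and "C1 \<union> C2 = leaves T" and "C1 \<inter> C2 = {}"
  shows "full_branching H (m + n) (comparable_subtree T C1) \<sigma>
     \<or> (\<exists>\<tau>. prefix \<sigma> \<tau> \<and> length \<tau> = m + n \<and>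
            full_branching H (m + 2 * n) (comparable_subtree T C2) \<tau>)"
proof (cases "full_branching H (m + n) (comparable_subtree T C1) \<sigma>")
  case True
  then show ?thesis by blast
next
  case False
  then obtain f where "str_prefix_fun \<sigma> f"
    and \<tau>_not_C1: "restr f (m + n) \<notin> comparable_subtree T C1"
    unfolding full_branching_def by blast
  define \<tau> where "\<tau> = restr f (m + n)"
  have "prefix \<sigma> \<tau>"
    unfolding \<tau>_def using \<open>str_prefix_fun \<sigma> f\<close> assms(1)
    by (intro prefix_restr_if_str_prefix_fun) simp_all
  moreover have "length \<tau> = m + n"
    unfolding \<tau>_def by simp
  moreover have "full_branching H (m + 2 * n) (comparable_subtree T C2) \<tau>"
    using full_branching_comparable_subtree_of_other_part[of T C1 C2 \<tau>] assms(2,3,6)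
      \<tau>_not_C1 full_branching_prefix[OF \<open>prefix \<sigma> \<tau>\<close> assms(5)]
    unfolding \<tau>_def by simp
  ultimately show ?thesis by blast
qed

end
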